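(* Let $K$ be an algebraically closed field, $\mathcal{T}$ a $\operatorname{Hom}$-finite Krull–Schmidt triangulated $K$-category with Jacobson radical $\mathcal{J}$, $\mathcal{I}$ an ideal, and $f:X\to Y$ a morphism between indecomposable objects $X$ and $Y$. Then (1) $f$ is left $\mathcal{I}$-irreducible if and only if $f\in\mathcal{I}(X,Y)\setminus(\mathcal{J}\mathcal{I})(X,Y)$; (2) $f$ is right $\mathcal{I}$-irreducible if and only if $f\in\mathcal{I}(X,Y)\setminus(\mathcal{I}\mathcal{J})(X,Y)$; (3) $f$ is $\mathcal{I}$-irreducible if and only if $f\in\mathcal{I}(X,Y)\setminus\big((\mathcal{J}\mathcal{I})(X,Y)\cup(\mathcal{I}\mathcal{J})(X,Y)\big)$.
   Context: Composition of $h_1$ then $h_2$ is $h_2h_1$. An ideal: subgroups $\mathcal{I}(X,Y)\subseteq\operatorname{Hom}(X,Y)$ closed under composition. For ideals $\mathcal{A},\mathcal{B}$, $\mathcal{A}\mathcal{B}$ is the ideal of finite sums of composites $ab$ with $a\in\mathcal{A}$, $b\in\mathcal{B}$ ($b$ applied first). $h$ is left $\mathcal{I}$-irreducible if $h\in\mathcal{I}$ and whenever $h=h_2h_1$ with $h_1\in\mathcal{I}$, $h_2$ is split epic; right $\mathcal{I}$-irreducible if $h\in\mathcal{I}$ and whenever $h=h_2h_1$ with $h_2\in\mathcal{I}$, $h_1$ is split monic; $\mathcal{I}$-irreducible if both. *)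

theory Defs
  imports "HOL-Computational_Algebra.Polynomial"
begin

(* A (small-presentation) K-linear category with shift and a class of triangles.
   Objects of type 'o, morphisms of type 'm, scalars of type 'k.
   cmp g f  is the composite "f then g", i.e. g f. *)
record ('o, 'm, 'k) tcat =
  Obj   :: "'o set"
  Hom   :: "'o \<Rightarrow> 'o \<Rightarrow> 'm set"
  cmp   :: "'m \<Rightarrow> 'm \<Rightarrow> 'm"
  idm   :: "'o \<Rightarrow> 'm"
  add   :: "'m \<Rightarrow> 'm \<Rightarrow> 'm"
  zer   :: "'o \<Rightarrow> 'o \<Rightarrow> 'm"
  smul  :: "'k \<Rightarrow> 'm \<Rightarrow> 'm"
  shO   :: "'o \<Rightarrow> 'o"
  shM   :: "'m \<Rightarrow> 'm"
  Tri   :: "('o \<times> 'o \<times> 'o \<times> 'm \<times> 'm \<times> 'm) set"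

definition neg :: "('o, 'm, 'k::field, 'z) tcat_scheme \<Rightarrow> 'm \<Rightarrow> 'm" where
  "neg C f = smul C (-1) f"

definition is_category :: "('o, 'm, 'k, 'z) tcat_scheme \<Rightarrow> bool" where
  "is_category C \<longleftrightarrow>
     (\<forall>X Y. (X \<notin> Obj C \<or> Y \<notin> Obj C) \<longrightarrow> Hom C X Y = {}) \<and>
     (\<forall>X Y X' Y'. Hom C X Y \<inter> Hom C X' Y' \<noteq> {} \<longrightarrow> X = X' \<and> Y = Y') \<and>
     (\<forall>X\<in>Obj C. idm C X \<in> Hom C X X) \<and>
     (\<forall>X Y Z f g. f \<in> Hom C X Y \<longrightarrow> g \<in> Hom C Y Z \<longrightarrow> cmp C g f \<in> Hom C X Z) \<and>
     (\<forall>X Y f. f \<in> Hom C X Y \<longrightarrow> cmp C (idm C Y) f = f \<and> cmp C f (idm C X) = f) \<and>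
     (\<forall>W X Y Z f g h. f \<in> Hom C W X \<longrightarrow> g \<in> Hom C X Y \<longrightarrow> h \<in> Hom C Y Z \<longrightarrow>
        cmp C h (cmp C g f) = cmp C (cmp C h g) f)"

definition is_klinear :: "('o, 'm, 'k::field, 'z) tcat_scheme \<Rightarrow> bool" where
  "is_klinear C \<longleftrightarrow>
     (\<forall>X\<in>Obj C. \<forall>Y\<in>Obj C.
        zer C X Y \<in> Hom C X Y \<and>
        (\<forall>f\<in>Hom C X Y. \<forall>g\<in>Hom C X Y. add C f g \<in> Hom C X Y) \<and>
        (\<forall>c. \<forall>f\<in>Hom C X Y. smul C c f \<in> Hom C X Y) \<and>
        (\<forall>f\<in>Hom C X Y. \<forall>g\<in>Hom C X Y. \<forall>h\<in>Hom C X Y.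
            add C (add C f g) h = add C f (add C g h)) \<and>
        (\<forall>f\<in>Hom C X Y. \<forall>g\<in>Hom C X Y. add C f g = add C g f) \<and>
        (\<forall>f\<in>Hom C X Y. add C f (zer C X Y) = f) \<and>
        (\<forall>f\<in>Hom C X Y. add C f (neg C f) = zer C X Y) \<and>
        (\<forall>c. \<forall>f\<in>Hom C X Y. \<forall>g\<in>Hom C X Y.
            smul C c (add C f g) = add C (smul C c f) (smul C c g)) \<and>
        (\<forall>c d. \<forall>f\<in>Hom C X Y. smul C (c + d) f = add C (smul C c f) (smul C d f)) \<and>
        (\<forall>c d. \<forall>f\<in>Hom C X Y. smul C c (smul C d f) = smul C (c * d) f) \<and>
        (\<forall>f\<in>Hom C X Y. smul C 1 f = f)) \<and>
     (\<forall>X Y Z f f' g. f \<in> Hom C X Y \<longrightarrow> f' \<in> Hom C X Y \<longrightarrow> g \<in> Hom C Y Z \<longrightarrow>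
        cmp C g (add C f f') = add C (cmp C g f) (cmp C g f')) \<and>
     (\<forall>X Y Z f g g'. f \<in> Hom C X Y \<longrightarrow> g \<in> Hom C Y Z \<longrightarrow> g' \<in> Hom C Y Z \<longrightarrow>
        cmp C (add C g g') f = add C (cmp C g f) (cmp C g' f)) \<and>
     (\<forall>X Y Z f g c. f \<in> Hom C X Y \<longrightarrow> g \<in> Hom C Y Z \<longrightarrow>
        cmp C g (smul C c f) = smul C c (cmp C g f) \<and>
        cmp C (smul C c g) f = smul C c (cmp C g f))"

fun lincomb :: "('o, 'm, 'k, 'z) tcat_scheme \<Rightarrow> 'o \<Rightarrow> 'o \<Rightarrow> ('k \<times> 'm) list \<Rightarrow> 'm" where
  "lincomb C X Y [] = zer C X Y"
| "lincomb C X Y ((c, b) # xs) = add C (smul C c b) (lincomb C X Y xs)"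

fun msum :: "('o, 'm, 'k, 'z) tcat_scheme \<Rightarrow> 'o \<Rightarrow> 'o \<Rightarrow> 'm list \<Rightarrow> 'm" where
  "msum C X Y [] = zer C X Y"
| "msum C X Y (f # fs) = add C f (msum C X Y fs)"

definition hom_finite :: "('o, 'm, 'k, 'z) tcat_scheme \<Rightarrow> bool" where
  "hom_finite C \<longleftrightarrow> (\<forall>X\<in>Obj C. \<forall>Y\<in>Obj C. \<exists>bs. set bs \<subseteq> Hom C X Y \<and>
      (\<forall>f\<in>Hom C X Y. \<exists>cs. length cs = length bs \<and> f = lincomb C X Y (zip cs bs)))"

definition is_dsum :: "('o, 'm, 'k, 'z) tcat_scheme \<Rightarrow> 'o \<Rightarrow> 'o list \<Rightarrow> 'm list \<Rightarrow> 'm list \<Rightarrow> bool" where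
  "is_dsum C S Xs ins prs \<longleftrightarrow> S \<in> Obj C \<and>
     length ins = length Xs \<and> length prs = length Xs \<and>
     (\<forall>k<length Xs. Xs ! k \<in> Obj C \<and> ins ! k \<in> Hom C (Xs ! k) S \<and> prs ! k \<in> Hom C S (Xs ! k)) \<and>
     (\<forall>k<length Xs. \<forall>l<length Xs.
        cmp C (prs ! k) (ins ! l) = (if k = l then idm C (Xs ! k) else zer C (Xs ! l) (Xs ! k))) \<and>
     msum C S S (map (\<lambda>k. cmp C (ins ! k) (prs ! k)) [0..<length Xs]) = idm C S"

definition is_additive :: "('o, 'm, 'k, 'z) tcat_scheme \<Rightarrow> bool" where
  "is_additive C \<longleftrightarrow> (\<exists>Z. is_dsum C Z [] [] []) \<and>
     (\<forall>X\<in>Obj C. \<forall>Y\<in>Obj C. \<exists>S ins prs. is_dsum C S [X, Y] ins prs)"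

definition is_iso :: "('o, 'm, 'k, 'z) tcat_scheme \<Rightarrow> 'o \<Rightarrow> 'o \<Rightarrow> 'm \<Rightarrow> bool" where
  "is_iso C X Y f \<longleftrightarrow> f \<in> Hom C X Y \<and>
     (\<exists>g\<in>Hom C Y X. cmp C g f = idm C X \<and> cmp C f g = idm C Y)"

definition local_end :: "('o, 'm, 'k::field, 'z) tcat_scheme \<Rightarrow> 'o \<Rightarrow> bool" where
  "local_end C X \<longleftrightarrow> X \<in> Obj C \<and> idm C X \<noteq> zer C X X \<and>
     (\<forall>f\<in>Hom C X X. is_iso C X X f \<or> is_iso C X X (add C (idm C X) (neg C f)))"

definition krull_schmidt :: "('o, 'm, 'k::field, 'z) tcat_scheme \<Rightarrow> bool" where
  "krull_schmidt C \<longleftrightarrow> (\<forall>X\<in>Obj C. \<exists>Xs ins prs. is_dsum C X Xs ins prs \<and>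
      (\<forall>A\<in>set Xs. local_end C A))"

definition indecomposable :: "('o, 'm, 'k, 'z) tcat_scheme \<Rightarrow> 'o \<Rightarrow> bool" where
  "indecomposable C X \<longleftrightarrow> X \<in> Obj C \<and> idm C X \<noteq> zer C X X \<and>
     (\<forall>A B ins prs. is_dsum C X [A, B] ins prs \<longrightarrow> idm C A = zer C A A \<or> idm C B = zer C B B)"

definition shift_ok :: "('o, 'm, 'k::field, 'z) tcat_scheme \<Rightarrow> bool" where
  "shift_ok C \<longleftrightarrow> bij_betw (shO C) (Obj C) (Obj C) \<and>
     (\<forall>X\<in>Obj C. \<forall>Y\<in>Obj C. bij_betw (shM C) (Hom C X Y) (Hom C (shO C X) (shO C Y))) \<and>
     (\<forall>X\<in>Obj C. shM C (idm C X) = idm C (shO C X)) \<and>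
     (\<forall>X Y Z f g. f \<in> Hom C X Y \<longrightarrow> g \<in> Hom C Y Z \<longrightarrow> shM C (cmp C g f) = cmp C (shM C g) (shM C f)) \<and>
     (\<forall>X Y f g c. f \<in> Hom C X Y \<longrightarrow> g \<in> Hom C X Y \<longrightarrow>
        shM C (add C f g) = add C (shM C f) (shM C g) \<and> shM C (smul C c f) = smul C c (shM C f))"

definition is_triangle :: "('o, 'm, 'k, 'z) tcat_scheme \<Rightarrow> 'o \<times> 'o \<times> 'o \<times> 'm \<times> 'm \<times> 'm \<Rightarrow> bool" where
  "is_triangle C t \<longleftrightarrow> (case t of (X, Y, Z, u, v, w) \<Rightarrow>
     X \<in> Obj C \<and> Y \<in> Obj C \<and> Z \<in> Obj C \<and> u \<in> Hom C X Y \<and> v \<in> Hom C Y Z \<and> w \<in> Hom C Z (shO C X))"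

definition tri_iso :: "('o, 'm, 'k, 'z) tcat_scheme \<Rightarrow> 'o \<times> 'o \<times> 'o \<times> 'm \<times> 'm \<times> 'm \<Rightarrow>
    'o \<times> 'o \<times> 'o \<times> 'm \<times> 'm \<times> 'm \<Rightarrow> bool" where
  "tri_iso C t t' \<longleftrightarrow> (case t of (X, Y, Z, u, v, w) \<Rightarrow> case t' of (X', Y', Z', u', v', w') \<Rightarrow>
     (\<exists>a b c. is_iso C X X' a \<and> is_iso C Y Y' b \<and> is_iso C Z Z' c \<and>
        cmp C b u = cmp C u' a \<and> cmp C c v = cmp C v' b \<and> cmp C (shM C a) w = cmp C w' c))"

definition triangulated_axioms :: "('o, 'm, 'k::field, 'z) tcat_scheme \<Rightarrow> bool" where
  "triangulated_axioms C \<longleftrightarrow>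
     \<comment> \<open>TR1: triangles, isomorphism closure, identity triangle, every morphism has a cone\<close>
     (\<forall>t\<in>Tri C. is_triangle C t) \<and>
     (\<forall>t\<in>Tri C. \<forall>t'. is_triangle C t' \<and> tri_iso C t t' \<longrightarrow> t' \<in> Tri C) \<and>
     (\<forall>X\<in>Obj C. \<forall>Z. is_dsum C Z [] [] [] \<longrightarrow>
        (X, X, Z, idm C X, zer C X Z, zer C Z (shO C X)) \<in> Tri C) \<and>
     (\<forall>X Y u. u \<in> Hom C X Y \<longrightarrow> (\<exists>Z v w. (X, Y, Z, u, v, w) \<in> Tri C)) \<and>
     \<comment> \<open>TR2: rotation\<close>
     (\<forall>X Y Z u v w. is_triangle C (X, Y, Z, u, v, w) \<longrightarrow>
        ((X, Y, Z, u, v, w) \<in> Tri C \<longleftrightarrow> (Y, Z, shO C X, v, w, neg C (shM C u)) \<in> Tri C)) \<and>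
     \<comment> \<open>TR3: morphisms of triangles\<close>
     (\<forall>X Y Z u v w X' Y' Z' u' v' w' a b.
        (X, Y, Z, u, v, w) \<in> Tri C \<longrightarrow> (X', Y', Z', u', v', w') \<in> Tri C \<longrightarrow>
        a \<in> Hom C X X' \<longrightarrow> b \<in> Hom C Y Y' \<longrightarrow> cmp C b u = cmp C u' a \<longrightarrow>
        (\<exists>c\<in>Hom C Z Z'. cmp C c v = cmp C v' b \<and> cmp C (shM C a) w = cmp C w' c)) \<and>
     \<comment> \<open>TR4: octahedral axiom\<close>
     (\<forall>X Y Z u v Z' j k X' l i Y' m n.
        (X, Y, Z', u, j, k) \<in> Tri C \<longrightarrow> (Y, Z, X', v, l, i) \<in> Tri C \<longrightarrow>
        (X, Z, Y', cmp C v u, m, n) \<in> Tri C \<longrightarrow>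
        (\<exists>f g. (Z', Y', X', f, g, cmp C (shM C j) i) \<in> Tri C \<and>
           cmp C f j = cmp C m v \<and> cmp C n f = k \<and> cmp C g m = l \<and>
           cmp C (shM C u) n = cmp C i g))"

definition hf_ks_triangulated_kcat :: "('o, 'm, 'k::field, 'z) tcat_scheme \<Rightarrow> bool" where
  "hf_ks_triangulated_kcat C \<longleftrightarrow> is_category C \<and> is_klinear C \<and> is_additive C \<and>
     hom_finite C \<and> krull_schmidt C \<and> shift_ok C \<and> triangulated_axioms C"

definition is_ideal :: "('o, 'm, 'k::field, 'z) tcat_scheme \<Rightarrow> ('o \<Rightarrow> 'o \<Rightarrow> 'm set) \<Rightarrow> bool" where
  "is_ideal C I \<longleftrightarrow> (\<forall>X Y. I X Y \<subseteq> Hom C X Y) \<and>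
     (\<forall>X\<in>Obj C. \<forall>Y\<in>Obj C. zer C X Y \<in> I X Y \<and>
        (\<forall>f\<in>I X Y. \<forall>g\<in>I X Y. add C f g \<in> I X Y) \<and> (\<forall>f\<in>I X Y. neg C f \<in> I X Y)) \<and>
     (\<forall>W X Y Z h f g. h \<in> Hom C W X \<longrightarrow> f \<in> I X Y \<longrightarrow> g \<in> Hom C Y Z \<longrightarrow>
        cmp C g (cmp C f h) \<in> I W Z)"

definition jrad :: "('o, 'm, 'k::field, 'z) tcat_scheme \<Rightarrow> 'o \<Rightarrow> 'o \<Rightarrow> 'm set" where
  "jrad C X Y = {f \<in> Hom C X Y. \<forall>g\<in>Hom C Y X. is_iso C X X (add C (idm C X) (neg C (cmp C g f)))}"

text \<open>Product ideal AB: finite sums of composites a b with b in B applied first.\<close>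
inductive_set iprod :: "('o, 'm, 'k, 'z) tcat_scheme \<Rightarrow> ('o \<Rightarrow> 'o \<Rightarrow> 'm set) \<Rightarrow>
    ('o \<Rightarrow> 'o \<Rightarrow> 'm set) \<Rightarrow> 'o \<Rightarrow> 'o \<Rightarrow> 'm set"
  for C A B X Y where
  iprod_zero: "zer C X Y \<in> iprod C A B X Y"
| iprod_step: "\<lbrakk>s \<in> iprod C A B X Y; W \<in> Obj C; b \<in> B X W; a \<in> A W Y\<rbrakk>
      \<Longrightarrow> add C (cmp C a b) s \<in> iprod C A B X Y"

definition split_epi :: "('o, 'm, 'k, 'z) tcat_scheme \<Rightarrow> 'o \<Rightarrow> 'o \<Rightarrow> 'm \<Rightarrow> bool" where
  "split_epi C X Y h \<longleftrightarrow> h \<in> Hom C X Y \<and> (\<exists>s\<in>Hom C Y X. cmp C h s = idm C Y)"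

definition split_mono :: "('o, 'm, 'k, 'z) tcat_scheme \<Rightarrow> 'o \<Rightarrow> 'o \<Rightarrow> 'm \<Rightarrow> bool" where
  "split_mono C X Y h \<longleftrightarrow> h \<in> Hom C X Y \<and> (\<exists>r\<in>Hom C Y X. cmp C r h = idm C X)"

definition left_irr :: "('o, 'm, 'k, 'z) tcat_scheme \<Rightarrow> ('o \<Rightarrow> 'o \<Rightarrow> 'm set) \<Rightarrow> 'o \<Rightarrow> 'o \<Rightarrow> 'm \<Rightarrow> bool" where
  "left_irr C I X Y h \<longleftrightarrow> h \<in> I X Y \<and>
     (\<forall>Z h1 h2. Z \<in> Obj C \<longrightarrow> h1 \<in> I X Z \<longrightarrow> h2 \<in> Hom C Z Y \<longrightarrow> h = cmp C h2 h1 \<longrightarrow>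
        split_epi C Z Y h2)"

definition right_irr :: "('o, 'm, 'k, 'z) tcat_scheme \<Rightarrow> ('o \<Rightarrow> 'o \<Rightarrow> 'm set) \<Rightarrow> 'o \<Rightarrow> 'o \<Rightarrow> 'm \<Rightarrow> bool" where
  "right_irr C I X Y h \<longleftrightarrow> h \<in> I X Y \<and>
     (\<forall>Z h1 h2. Z \<in> Obj C \<longrightarrow> h1 \<in> Hom C X Z \<longrightarrow> h2 \<in> I Z Y \<longrightarrow> h = cmp C h2 h1 \<longrightarrow>
        split_mono C X Z h1)"

definition irr :: "('o, 'm, 'k, 'z) tcat_scheme \<Rightarrow> ('o \<Rightarrow> 'o \<Rightarrow> 'm set) \<Rightarrow> 'o \<Rightarrow> 'o \<Rightarrow> 'm \<Rightarrow> bool" where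
  "irr C I X Y h \<longleftrightarrow> left_irr C I X Y h \<and> right_irr C I X Y h"

end

theory Submission
  imports Defs
begin

(* An indecomposable object X of a Krull-Schmidt category has a local endomorphism ring:
   writing X as a biproduct A + T with A local, indecomposability forces T = 0, so X is
   isomorphic to A.  For h : Z -> Y with Y local, h is split epi iff h is not radical:
   if 1 - g h is not invertible, neither is 1 - h g (Jacobson's lemma), so h g is invertible.
   In an additive category every element of a product ideal A B is a single composite a b,
   obtained by passing through a biproduct.  Hence f in I is left I-irreducible iff no
   factorisation f = h2 h1 with h1 in I has h2 radical, i.e. iff f is not in J I; dually on
   the right. *)

locale klinear_category =
  fixes C :: "('o, 'm, 'k::field, 'z) tcat_scheme"
  assumes category: "is_category C" and klinear: "is_klinear C"
begin

lemma hom_objs: "f \<in> Hom C X Y \<Longrightarrow> X \<in> Obj C \<and> Y \<in> Obj C"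
  using category unfolding is_category_def by (metis empty_iff)

lemma hom_unique: "f \<in> Hom C X Y \<Longrightarrow> f \<in> Hom C X' Y' \<Longrightarrow> X = X' \<and> Y = Y'"
  using category unfolding is_category_def by (metis disjoint_iff)

lemma idm_hom: "X \<in> Obj C \<Longrightarrow> idm C X \<in> Hom C X X"
  using category unfolding is_category_def by blast

lemma cmp_hom: "f \<in> Hom C X Y \<Longrightarrow> g \<in> Hom C Y Z \<Longrightarrow> cmp C g f \<in> Hom C X Z"
  using category unfolding is_category_def by blast

lemma cmp_idm: "f \<in> Hom C X Y \<Longrightarrow> cmp C (idm C Y) f = f \<and> cmp C f (idm C X) = f"
  using category unfolding is_category_def by blast

lemma cmp_assoc_hom:
  "f \<in> Hom C W X \<Longrightarrow> g \<in> Hom C X Y \<Longrightarrow> h \<in> Hom C Y Z \<Longrightarrow>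
   cmp C (cmp C h g) f = cmp C h (cmp C g f)"
  using category unfolding is_category_def by metis

lemma zer_hom: "X \<in> Obj C \<Longrightarrow> Y \<in> Obj C \<Longrightarrow> zer C X Y \<in> Hom C X Y"
  using klinear unfolding is_klinear_def by blast

lemma hom_space:
  assumes "f \<in> Hom C X Y" "g \<in> Hom C X Y" "h \<in> Hom C X Y"
  shows "add C f g \<in> Hom C X Y" "smul C c f \<in> Hom C X Y"
    "add C (add C f g) h = add C f (add C g h)" "add C f g = add C g f"
    "add C f (zer C X Y) = f" "add C f (neg C f) = zer C X Y"
    "smul C c (add C f g) = add C (smul C c f) (smul C c g)"
    "smul C c (smul C d f) = smul C (c * d) f" "smul C 1 f = f"
  using klinear[unfolded is_klinear_def, THEN conjunct1, rule_format,
      OF hom_objs[OF assms(1), THEN conjunct1] hom_objs[OF assms(1), THEN conjunct2]] assms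
  by (blast | simp)+

lemma cmp_bilinear:
  assumes "f \<in> Hom C X Y" "f' \<in> Hom C X Y" "g \<in> Hom C Y Z" "g' \<in> Hom C Y Z"
  shows "cmp C g (add C f f') = add C (cmp C g f) (cmp C g f')"
    "cmp C (add C g g') f = add C (cmp C g f) (cmp C g' f)"
    "cmp C g (smul C c f) = smul C c (cmp C g f)"
    "cmp C (smul C c g) f = smul C c (cmp C g f)"
  using klinear[unfolded is_klinear_def, THEN conjunct2] assms by blast+

section \<open>Morphisms as typed arrows\<close>

(* Hom-sets of distinct pairs of objects are disjoint, so every morphism has a unique source and
   target; phrasing facts with arr, src and trg lets the simplifier discharge typing conditions. *)
definition arr :: "'m \<Rightarrow> bool" where
  "arr f \<longleftrightarrow> (\<exists>X Y. f \<in> Hom C X Y)"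

definition src :: "'m \<Rightarrow> 'o" where
  "src f = (THE X. \<exists>Y. f \<in> Hom C X Y)"

definition trg :: "'m \<Rightarrow> 'o" where
  "trg f = (THE Y. \<exists>X. f \<in> Hom C X Y)"

lemma hom_src_trg: "f \<in> Hom C X Y \<Longrightarrow> src f = X \<and> trg f = Y"
  unfolding src_def trg_def using hom_unique by (intro conjI the_equality) blast+

lemma hom_iff: "f \<in> Hom C X Y \<longleftrightarrow> arr f \<and> src f = X \<and> trg f = Y"
  using hom_src_trg unfolding arr_def by blast

lemma arr_hom: "arr f \<Longrightarrow> f \<in> Hom C (src f) (trg f)"
  by (simp add: hom_iff)

lemma arr_objs [simp]: "arr f \<Longrightarrow> src f \<in> Obj C" "arr f \<Longrightarrow> trg f \<in> Obj C"
  using arr_hom hom_objs by blast+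

lemma cmp_simps [simp]:
  assumes "arr f" "arr g" "trg f = src g"
  shows "arr (cmp C g f)" "src (cmp C g f) = src f" "trg (cmp C g f) = trg g"
  using cmp_hom[OF arr_hom[OF assms(1)], of g "trg g"] assms by (simp_all add: hom_iff)

lemma idm_simps [simp]:
  assumes "X \<in> Obj C" shows "arr (idm C X)" "src (idm C X) = X" "trg (idm C X) = X"
  using idm_hom[OF assms] by (simp_all add: hom_iff)

lemma zer_simps [simp]:
  assumes "X \<in> Obj C" "Y \<in> Obj C" shows "arr (zer C X Y)" "src (zer C X Y) = X" "trg (zer C X Y) = Y"
  using zer_hom[OF assms] by (simp_all add: hom_iff)

lemma add_simps [simp]:
  assumes "arr f" "arr g" "src g = src f" "trg g = trg f"
  shows "arr (add C f g)" "src (add C f g) = src f" "trg (add C f g) = trg f"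
  using hom_space(1)[OF arr_hom[OF assms(1)], of g g] assms by (simp_all add: hom_iff)

lemma smul_simps [simp]:
  assumes "arr f" shows "arr (smul C c f)" "src (smul C c f) = src f" "trg (smul C c f) = trg f"
  using hom_space(2)[OF arr_hom[OF assms] arr_hom[OF assms] arr_hom[OF assms]]
  by (simp_all add: hom_iff)

lemma neg_simps [simp]:
  assumes "arr f" shows "arr (neg C f)" "src (neg C f) = src f" "trg (neg C f) = trg f"
  unfolding neg_def using assms by simp_all

lemma cmp_assoc [simp]:
  "arr f \<Longrightarrow> arr g \<Longrightarrow> arr h \<Longrightarrow> trg f = src g \<Longrightarrow> trg g = src h \<Longrightarrow>
   cmp C (cmp C h g) f = cmp C h (cmp C g f)"
  using cmp_assoc_hom[OF arr_hom, of f g "trg g" h "trg h"] by (simp add: hom_iff)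

lemma cmp_idm_left [simp]: "arr f \<Longrightarrow> trg f = Y \<Longrightarrow> cmp C (idm C Y) f = f"
  and cmp_idm_right [simp]: "arr f \<Longrightarrow> src f = X \<Longrightarrow> cmp C f (idm C X) = f"
  using cmp_idm[OF arr_hom] by blast+

lemma add_assoc [simp]:
  "arr f \<Longrightarrow> arr g \<Longrightarrow> arr h \<Longrightarrow> src g = src f \<Longrightarrow> trg g = trg f \<Longrightarrow> src h = src f \<Longrightarrow>
   trg h = trg f \<Longrightarrow> add C (add C f g) h = add C f (add C g h)"
  using hom_space(3)[OF arr_hom, of f g h] by (simp add: hom_iff)

lemma add_commute:
  "arr f \<Longrightarrow> arr g \<Longrightarrow> src g = src f \<Longrightarrow> trg g = trg f \<Longrightarrow> add C f g = add C g f"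
  using hom_space(4)[OF arr_hom, of f g g] by (simp add: hom_iff)

lemma add_left_commute:
  "arr f \<Longrightarrow> arr g \<Longrightarrow> arr h \<Longrightarrow> src g = src f \<Longrightarrow> trg g = trg f \<Longrightarrow> src h = src f \<Longrightarrow>
   trg h = trg f \<Longrightarrow> add C f (add C g h) = add C g (add C f h)"
  by (metis add_assoc add_commute)

lemmas add_ac = add_commute add_left_commute

lemma add_zer_right [simp]: "arr f \<Longrightarrow> src f = X \<Longrightarrow> trg f = Y \<Longrightarrow> add C f (zer C X Y) = f"
  using hom_space(5)[OF arr_hom, of f f f] by (simp add: hom_iff)

lemma add_zer_left [simp]: "arr f \<Longrightarrow> src f = X \<Longrightarrow> trg f = Y \<Longrightarrow> add C (zer C X Y) f = f"
  by (metis add_commute add_zer_right arr_objs zer_simps)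

lemma add_neg_right [simp]: "arr f \<Longrightarrow> add C f (neg C f) = zer C (src f) (trg f)"
  using hom_space(6)[OF arr_hom, of f f f] by (simp add: hom_iff)

lemma add_neg_left [simp]: "arr f \<Longrightarrow> add C (neg C f) f = zer C (src f) (trg f)"
  by (metis add_commute add_neg_right neg_simps)

lemma add_neg_cancel_left [simp]:
  "arr f \<Longrightarrow> arr g \<Longrightarrow> src g = src f \<Longrightarrow> trg g = trg f \<Longrightarrow> add C f (add C (neg C f) g) = g"
  and neg_add_cancel_left [simp]:
  "arr f \<Longrightarrow> arr g \<Longrightarrow> src g = src f \<Longrightarrow> trg g = trg f \<Longrightarrow> add C (neg C f) (add C f g) = g"
  by (metis add_assoc add_neg_right add_neg_left add_zer_left neg_simps)+

lemma smul_smul [simp]: "arr f \<Longrightarrow> smul C c (smul C d f) = smul C (c * d) f"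
  and smul_one [simp]: "arr f \<Longrightarrow> smul C 1 f = f"
  using hom_space(8,9)[OF arr_hom arr_hom arr_hom] by blast+

lemma smul_add [simp]:
  "arr f \<Longrightarrow> arr g \<Longrightarrow> src g = src f \<Longrightarrow> trg g = trg f \<Longrightarrow>
   smul C c (add C f g) = add C (smul C c f) (smul C c g)"
  using hom_space(7)[OF arr_hom, of f g g] by (simp add: hom_iff)

lemma neg_neg [simp]: "arr f \<Longrightarrow> neg C (neg C f) = f"
  by (simp add: neg_def)

lemma neg_add [simp]:
  "arr f \<Longrightarrow> arr g \<Longrightarrow> src g = src f \<Longrightarrow> trg g = trg f \<Longrightarrow>
   neg C (add C f g) = add C (neg C f) (neg C g)"
  by (simp add: neg_def)

lemma cmp_add_right [simp]:
  "arr f \<Longrightarrow> arr f' \<Longrightarrow> arr g \<Longrightarrow> src f' = src f \<Longrightarrow> trg f' = trg f \<Longrightarrow> trg f = src g \<Longrightarrow>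
   cmp C g (add C f f') = add C (cmp C g f) (cmp C g f')"
  using cmp_bilinear(1)[OF arr_hom, of f f' g "trg g" g] by (simp add: hom_iff)

lemma cmp_add_left [simp]:
  "arr f \<Longrightarrow> arr g \<Longrightarrow> arr g' \<Longrightarrow> src g' = src g \<Longrightarrow> trg g' = trg g \<Longrightarrow> trg f = src g \<Longrightarrow>
   cmp C (add C g g') f = add C (cmp C g f) (cmp C g' f)"
  using cmp_bilinear(2)[OF arr_hom, of f f g "trg g" g'] by (simp add: hom_iff)

lemma cmp_smul_right [simp]: "arr f \<Longrightarrow> arr g \<Longrightarrow> trg f = src g \<Longrightarrow> cmp C g (smul C c f) = smul C c (cmp C g f)"
  and cmp_smul_left [simp]: "arr f \<Longrightarrow> arr g \<Longrightarrow> trg f = src g \<Longrightarrow> cmp C (smul C c g) f = smul C c (cmp C g f)"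
  using cmp_bilinear(3,4)[OF arr_hom, of f f g "trg g" g] by (simp_all add: hom_iff)

lemma cmp_neg_right [simp]: "arr f \<Longrightarrow> arr g \<Longrightarrow> trg f = src g \<Longrightarrow> cmp C g (neg C f) = neg C (cmp C g f)"
  and cmp_neg_left [simp]: "arr f \<Longrightarrow> arr g \<Longrightarrow> trg f = src g \<Longrightarrow> cmp C (neg C g) f = neg C (cmp C g f)"
  unfolding neg_def by simp_all

lemma idempotent_add_zer:
  assumes "arr x" "add C x x = x" shows "x = zer C (src x) (trg x)"
proof -
  have "zer C (src x) (trg x) = add C (add C x x) (neg C x)"
    using assms(1) by (simp only: assms(2) add_neg_right)
  also have "\<dots> = x"
    using assms(1) by simp
  finally show ?thesis ..
qed

lemma cmp_zer_right [simp]: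
  assumes "arr g" "X \<in> Obj C" "Y = src g" shows "cmp C g (zer C X Y) = zer C X (trg g)"
proof -
  let ?z = "cmp C g (zer C X Y)"
  have "?z = cmp C g (add C (zer C X Y) (zer C X Y))"
    using assms by simp
  also have "\<dots> = add C ?z ?z"
    using assms by (intro cmp_add_right) simp_all
  finally show ?thesis
    using idempotent_add_zer[of ?z] assms by simp
qed

lemma cmp_zer_left [simp]:
  assumes "arr f" "Z \<in> Obj C" "Y = trg f" shows "cmp C (zer C Y Z) f = zer C (src f) Z"
proof -
  let ?z = "cmp C (zer C Y Z) f"
  have "?z = cmp C (add C (zer C Y Z) (zer C Y Z)) f"
    using assms by simp
  also have "\<dots> = add C ?z ?z"
    using assms by (intro cmp_add_left) simp_all
  finally show ?thesis
    using idempotent_add_zer[of ?z] assms by simp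
qed

lemma neg_zer [simp]:
  assumes "X \<in> Obj C" "Y \<in> Obj C" shows "neg C (zer C X Y) = zer C X Y"
proof -
  have "neg C (zer C X Y) = add C (zer C X Y) (neg C (zer C X Y))"
    using assms by (intro add_zer_left[symmetric]) simp_all
  also have "\<dots> = zer C X Y"
    using assms add_neg_right[of "zer C X Y"] by simp
  finally show ?thesis .
qed

lemma cmp_reassoc:
  assumes "cmp C g f = h" "arr f" "arr g" "trg f = src g" "arr x" "trg x = src f"
  shows "cmp C g (cmp C f x) = cmp C h x"
proof -
  have "cmp C g (cmp C f x) = cmp C (cmp C g f) x"
    using assms(2-) by simp
  then show ?thesis
    using assms(1) by simp
qed

section \<open>Isomorphisms and the Jacobson radical\<close>

abbreviation one_minus :: "'o \<Rightarrow> 'm \<Rightarrow> 'm" where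
  "one_minus X f \<equiv> add C (idm C X) (neg C f)"

lemma is_iso_iff:
  "is_iso C X Y f \<longleftrightarrow> arr f \<and> src f = X \<and> trg f = Y \<and>
     (\<exists>g. arr g \<and> src g = Y \<and> trg g = X \<and> cmp C g f = idm C X \<and> cmp C f g = idm C Y)"
  unfolding is_iso_def Bex_def hom_iff by blast

lemma is_iso_idm: "X \<in> Obj C \<Longrightarrow> is_iso C X X (idm C X)"
  unfolding is_iso_iff by (intro conjI exI[of _ "idm C X"]) simp_all

lemma is_iso_cmp:
  assumes "is_iso C X Y f" "is_iso C Y Z g" shows "is_iso C X Z (cmp C g f)"
proof -
  obtain f' where f: "arr f" "src f = X" "trg f = Y" and f': "arr f'" "src f' = Y" "trg f' = X"
    and ff': "cmp C f' f = idm C X" "cmp C f f' = idm C Y"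
    using assms(1) unfolding is_iso_iff by blast
  obtain g' where g: "arr g" "src g = Y" "trg g = Z" and g': "arr g'" "src g' = Z" "trg g' = Y"
    and gg': "cmp C g' g = idm C Y" "cmp C g g' = idm C Z"
    using assms(2) unfolding is_iso_iff by blast
  have "cmp C g' (cmp C g f) = f" "cmp C f (cmp C f' g') = g'"
    using cmp_reassoc[of g' g "idm C Y" f] cmp_reassoc[of f f' "idm C Y" g'] f f' g g' ff' gg' by simp_all
  then show ?thesis
    unfolding is_iso_iff using f f' g g' ff' gg' by (intro conjI exI[of _ "cmp C f' g'"]) simp_all
qed

lemma add_eq_imp_eq_add_neg:
  assumes "add C x y = z" "arr x" "arr y" "src y = src x" "trg y = trg x"
  shows "y = add C z (neg C x)"
proof -
  have "y = add C (neg C x) (add C x y)"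
    using assms(2-) by simp
  also have "\<dots> = add C z (neg C x)"
    using assms add_commute[of "neg C x" z] by (metis add_simps neg_simps)
  finally show ?thesis .
qed

(* Jacobson's lemma: if c inverts 1 - a b, then 1 + b c a inverts 1 - b a. *)
lemma is_iso_one_minus_swap:
  assumes a: "arr a" "src a = W" "trg a = X" and b: "arr b" "src b = X" "trg b = W"
    and iso: "is_iso C X X (one_minus X (cmp C a b))"
  shows "is_iso C W W (one_minus W (cmp C b a))"
proof -
  obtain c where c: "arr c" "src c = X" "trg c = X"
    and inv: "cmp C c (one_minus X (cmp C a b)) = idm C X" "cmp C (one_minus X (cmp C a b)) c = idm C X"
    using iso unfolding is_iso_iff by blast
  have obj: "W \<in> Obj C" "X \<in> Obj C"
    using a arr_objs by blast+
  have c_left: "add C c (neg C (cmp C c (cmp C a b))) = idm C X"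
    and c_right: "add C c (neg C (cmp C a (cmp C b c))) = idm C X"
    using a b c obj inv by simp_all
  have "cmp C b (cmp C (add C c (neg C (cmp C c (cmp C a b)))) a) = cmp C b (cmp C (idm C X) a)"
    by (simp only: c_left)
  then have bca_left: "add C (cmp C b (cmp C c a)) (neg C (cmp C b (cmp C c (cmp C a (cmp C b a))))) = cmp C b a"
    using a b c obj by simp
  have "cmp C b (cmp C (add C c (neg C (cmp C a (cmp C b c)))) a) = cmp C b (cmp C (idm C X) a)"
    by (simp only: c_right)
  then have bca_right: "add C (cmp C b (cmp C c a)) (neg C (cmp C b (cmp C a (cmp C b (cmp C c a))))) = cmp C b a"
    using a b c obj by simp
  show ?thesis
    unfolding is_iso_iff
  proof (intro conjI exI[of _ "add C (idm C W) (cmp C b (cmp C c a))"])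
    show "cmp C (add C (idm C W) (cmp C b (cmp C c a))) (one_minus W (cmp C b a)) = idm C W"
      using a b c obj add_eq_imp_eq_add_neg[OF bca_left] by simp
    show "cmp C (one_minus W (cmp C b a)) (add C (idm C W) (cmp C b (cmp C c a))) = idm C W"
      using a b c obj add_eq_imp_eq_add_neg[OF bca_right] by (simp add: add_ac)
  qed (use a b c obj in simp_all)
qed

lemma jrad_iff:
  "f \<in> jrad C X Y \<longleftrightarrow> arr f \<and> src f = X \<and> trg f = Y \<and>
     (\<forall>g. arr g \<and> src g = Y \<and> trg g = X \<longrightarrow> is_iso C X X (one_minus X (cmp C g f)))"
  unfolding jrad_def Ball_def hom_iff mem_Collect_eq by blast

lemma jrad_subset_hom: "jrad C X Y \<subseteq> Hom C X Y"
  unfolding jrad_def by blast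

lemma jradD:
  assumes "f \<in> jrad C X Y"
  shows "arr f" "src f = X" "trg f = Y"
    and "arr g \<Longrightarrow> src g = Y \<Longrightarrow> trg g = X \<Longrightarrow> is_iso C X X (one_minus X (cmp C g f))"
  using assms unfolding jrad_iff by blast+

lemma jrad_cmp_left:
  assumes f: "f \<in> jrad C X Y" and g: "arr g" "src g = Y"
  shows "cmp C g f \<in> jrad C X (trg g)"
  unfolding jrad_iff
proof (intro conjI allI impI)
  fix k assume k: "arr k \<and> src k = trg g \<and> trg k = X"
  have "is_iso C X X (one_minus X (cmp C (cmp C k g) f))"
    using jradD(4)[OF f, of "cmp C k g"] g k by simp
  then show "is_iso C X X (one_minus X (cmp C k (cmp C g f)))"
    using jradD(1-3)[OF f] g k by simp
qed (use jradD(1-3)[OF f] g in auto)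

lemma jrad_cmp_right:
  assumes f: "f \<in> jrad C X Y" and h: "arr h" "trg h = X"
  shows "cmp C f h \<in> jrad C (src h) Y"
  unfolding jrad_iff
proof (intro conjI allI impI)
  fix g assume g: "arr g \<and> src g = Y \<and> trg g = src h"
  have "is_iso C X X (one_minus X (cmp C (cmp C h g) f))"
    using jradD(4)[OF f, of "cmp C h g"] g h by simp
  then have "is_iso C X X (one_minus X (cmp C h (cmp C g f)))"
    using jradD(1-3)[OF f] g h by simp
  then show "is_iso C (src h) (src h) (one_minus (src h) (cmp C g (cmp C f h)))"
    using is_iso_one_minus_swap[of h "src h" X "cmp C g f"] jradD(1-3)[OF f] g h by simp
qed (use jradD(1-3)[OF f] h in auto)

lemma jrad_neg: "f \<in> jrad C X Y \<Longrightarrow> neg C f \<in> jrad C X Y"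
  unfolding jrad_iff by (metis cmp_neg_left cmp_neg_right neg_simps)

lemma jrad_zer: "X \<in> Obj C \<Longrightarrow> Y \<in> Obj C \<Longrightarrow> zer C X Y \<in> jrad C X Y"
  unfolding jrad_iff using is_iso_idm by simp

(* With u = 1 - g f1 invertible with right inverse v, 1 - g (f1 + f2) = u (1 - v g f2). *)
lemma jrad_add:
  assumes f1: "f1 \<in> jrad C X Y" and f2: "f2 \<in> jrad C X Y"
  shows "add C f1 f2 \<in> jrad C X Y"
proof -
  have f1m: "arr f1" "src f1 = X" "trg f1 = Y" and f2m: "arr f2" "src f2 = X" "trg f2 = Y"
    using f1 f2 unfolding jrad_iff by blast+
  have obj: "X \<in> Obj C" "Y \<in> Obj C"
    using f1m arr_objs by blast+
  show ?thesis
    unfolding jrad_iff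
  proof (intro conjI allI impI)
    fix g assume g: "arr g \<and> src g = Y \<and> trg g = X"
    let ?u = "one_minus X (cmp C g f1)"
    have u: "arr ?u" "src ?u = X" "trg ?u = X"
      using g f1m obj by auto
    have iso_u: "is_iso C X X ?u"
      using f1 g unfolding jrad_iff by blast
    then obtain v where v: "arr v" "src v = X" "trg v = X" "cmp C ?u v = idm C X"
      unfolding is_iso_iff by blast
    have iso_w: "is_iso C X X (one_minus X (cmp C (cmp C v g) f2))"
      using jradD(4)[OF f2] g v by simp
    have "cmp C ?u (cmp C v (cmp C g f2)) = cmp C g f2"
      using cmp_reassoc[of ?u v "idm C X" "cmp C g f2"] u v g f2m by simp
    then have "cmp C ?u (one_minus X (cmp C (cmp C v g) f2)) = one_minus X (cmp C g (add C f1 f2))"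
      using u v g f1m f2m obj by simp
    then show "is_iso C X X (one_minus X (cmp C g (add C f1 f2)))"
      using is_iso_cmp[OF iso_w iso_u] by simp
  qed (use f1m f2m in auto)
qed

lemma is_ideal_jrad: "is_ideal C (jrad C)"
  unfolding is_ideal_def
proof (intro conjI allI ballI impI)
  fix W X Y Z h f g assume "h \<in> Hom C W X" "f \<in> jrad C X Y" "g \<in> Hom C Y Z"
  then show "cmp C g (cmp C f h) \<in> jrad C W Z"
    using jrad_cmp_left[OF jrad_cmp_right] unfolding hom_iff by fastforce
qed (simp_all add: jrad_subset_hom jrad_zer jrad_add jrad_neg)

lemma idm_in_jrad_imp_zer:
  assumes "idm C Y \<in> jrad C Y Y" "Y \<in> Obj C" shows "idm C Y = zer C Y Y"
proof -
  have "is_iso C Y Y (zer C Y Y)"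
    using jradD(4)[OF assms(1), of "idm C Y"] assms(2) by simp
  then obtain g where "arr g" "src g = Y" "trg g = Y" "cmp C g (zer C Y Y) = idm C Y"
    using assms(2) unfolding is_iso_iff by auto
  then show ?thesis
    using assms(2) by simp
qed

section \<open>Finite biproducts\<close>

lemma msum_simps:
  assumes "\<forall>f\<in>set fs. arr f \<and> src f = X \<and> trg f = Y" "X \<in> Obj C" "Y \<in> Obj C"
  shows "arr (msum C X Y fs) \<and> src (msum C X Y fs) = X \<and> trg (msum C X Y fs) = Y"
  using assms(1) by (induction fs) (use assms(2,3) in auto)

lemma cmp_msum_left:
  assumes "\<forall>f\<in>set fs. arr f \<and> src f = X \<and> trg f = Y" "X \<in> Obj C" "Y \<in> Obj C"
    "arr g" "src g = Y"
  shows "cmp C g (msum C X Y fs) = msum C X (trg g) (map (cmp C g) fs)"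
  using assms(1)
proof (induction fs)
  case (Cons f fs)
  then show ?case
    using msum_simps[of fs X Y] assms(2-) by simp
qed (use assms in simp)

lemma cmp_msum_right:
  assumes "\<forall>f\<in>set fs. arr f \<and> src f = X \<and> trg f = Y" "X \<in> Obj C" "Y \<in> Obj C"
    "arr h" "trg h = X"
  shows "cmp C (msum C X Y fs) h = msum C (src h) Y (map (\<lambda>f. cmp C f h) fs)"
  using assms(1)
proof (induction fs)
  case (Cons f fs)
  then show ?case
    using msum_simps[of fs X Y] assms(2-) by simp
qed (use assms in simp)

lemma msum_delta:
  assumes "distinct ks" "X \<in> Obj C" "Y \<in> Obj C"
    and "k \<in> set ks \<Longrightarrow> arr f \<and> src f = X \<and> trg f = Y"
  shows "msum C X Y (map (\<lambda>l. if l = k then f else zer C X Y) ks) = (if k \<in> set ks then f else zer C X Y)"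
  using assms(1,4) by (induction ks) (use assms(2,3) in auto)

lemma is_dsumD:
  assumes "is_dsum C S Xs ins prs"
  shows "S \<in> Obj C" "length ins = length Xs" "length prs = length Xs"
    "\<And>k. k < length Xs \<Longrightarrow> Xs ! k \<in> Obj C \<and> arr (ins ! k) \<and> src (ins ! k) = Xs ! k \<and>
       trg (ins ! k) = S \<and> arr (prs ! k) \<and> src (prs ! k) = S \<and> trg (prs ! k) = Xs ! k"
    "\<And>k l. k < length Xs \<Longrightarrow> l < length Xs \<Longrightarrow>
       cmp C (prs ! k) (ins ! l) = (if k = l then idm C (Xs ! k) else zer C (Xs ! l) (Xs ! k))"
    "msum C S S (map (\<lambda>k. cmp C (ins ! k) (prs ! k)) [0..<length Xs]) = idm C S"
  using assms hom_iff unfolding is_dsum_def by blast+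

lemma is_dsumI:
  assumes "S \<in> Obj C" "length ins = length Xs" "length prs = length Xs"
    "\<And>k. k < length Xs \<Longrightarrow> Xs ! k \<in> Obj C \<and> arr (ins ! k) \<and> src (ins ! k) = Xs ! k \<and>
       trg (ins ! k) = S \<and> arr (prs ! k) \<and> src (prs ! k) = S \<and> trg (prs ! k) = Xs ! k"
    "\<And>k l. k < length Xs \<Longrightarrow> l < length Xs \<Longrightarrow>
       cmp C (prs ! k) (ins ! l) = (if k = l then idm C (Xs ! k) else zer C (Xs ! l) (Xs ! k))"
    "msum C S S (map (\<lambda>k. cmp C (ins ! k) (prs ! k)) [0..<length Xs]) = idm C S"
  shows "is_dsum C S Xs ins prs"
  using assms hom_iff unfolding is_dsum_def by blast

lemma is_dsum_expand:
  assumes "is_dsum C S Xs ins prs" "arr f" "trg f = S"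
  shows "f = msum C (src f) S (map (\<lambda>k. cmp C (ins ! k) (cmp C (prs ! k) f)) [0..<length Xs])"
proof -
  note D = is_dsumD[OF assms(1)]
  have summands: "\<forall>g\<in>set (map (\<lambda>k. cmp C (ins ! k) (prs ! k)) [0..<length Xs]). arr g \<and> src g = S \<and> trg g = S"
    using D(4) by auto
  have "f = cmp C (msum C S S (map (\<lambda>k. cmp C (ins ! k) (prs ! k)) [0..<length Xs])) f"
    using D(6) assms(2,3) by simp
  also have "\<dots> = msum C (src f) S (map (\<lambda>g. cmp C g f) (map (\<lambda>k. cmp C (ins ! k) (prs ! k)) [0..<length Xs]))"
    using cmp_msum_right[OF summands D(1) D(1) assms(2,3)] by simp
  also have "\<dots> = msum C (src f) S (map (\<lambda>k. cmp C (ins ! k) (cmp C (prs ! k) f)) [0..<length Xs])"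
    unfolding map_map o_def
    by (intro arg_cong[where f = "msum C (src f) S"] map_cong) (use D(4) assms(2,3) in auto)
  finally show ?thesis .
qed

lemma is_dsum_cmp_eqI:
  assumes "is_dsum C S Xs ins prs" "arr f" "arr g" "trg f = S" "trg g = S" "src g = src f"
    and "\<And>k. k < length Xs \<Longrightarrow> cmp C (prs ! k) f = cmp C (prs ! k) g"
  shows "f = g"
proof -
  have "f = msum C (src f) S (map (\<lambda>k. cmp C (ins ! k) (cmp C (prs ! k) f)) [0..<length Xs])"
    using is_dsum_expand[OF assms(1,2,4)] .
  also have "\<dots> = msum C (src f) S (map (\<lambda>k. cmp C (ins ! k) (cmp C (prs ! k) g)) [0..<length Xs])"
    using assms(7) by (intro arg_cong[where f = "msum C (src f) S"] map_cong) auto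
  also have "\<dots> = g"
    using is_dsum_expand[OF assms(1,3,5)] assms(6) by simp
  finally show ?thesis .
qed

lemma cmp_msum_delta:
  assumes ab: "\<forall>l<m. arr (a l) \<and> src (a l) = W l \<and> trg (a l) = V \<and> arr (b l) \<and> src (b l) = U \<and> trg (b l) = W l"
    and y: "arr y" "src y = V" and U: "U \<in> Obj C"
    and delta: "\<And>l. l < m \<Longrightarrow> cmp C y (a l) = (if l = k then idm C (W l) else zer C (W l) (trg y))"
  shows "cmp C y (msum C U V (map (\<lambda>l. cmp C (a l) (b l)) [0..<m])) = (if k < m then b k else zer C U (trg y))"
proof -
  have V: "V \<in> Obj C"
    using y arr_objs by blast
  have summands: "\<forall>f\<in>set (map (\<lambda>l. cmp C (a l) (b l)) [0..<m]). arr f \<and> src f = U \<and> trg f = V"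
    using ab by auto
  have bk: "arr (b k) \<and> src (b k) = U \<and> trg (b k) = trg y" if "k < m"
  proof -
    have ak: "arr (a k)" "src (a k) = W k" "trg (a k) = V"
      using ab that by auto
    then have "W k \<in> Obj C"
      using arr_objs by metis
    then have "trg (cmp C y (a k)) = W k"
      using delta[OF that] by simp
    then show ?thesis
      using ab ak y that by auto
  qed
  have "cmp C y (msum C U V (map (\<lambda>l. cmp C (a l) (b l)) [0..<m]))
      = msum C U (trg y) (map (cmp C y) (map (\<lambda>l. cmp C (a l) (b l)) [0..<m]))"
    using cmp_msum_left[OF summands U V y] .
  also have "\<dots> = msum C U (trg y) (map (\<lambda>l. if l = k then b k else zer C U (trg y)) [0..<m])"
  proof (unfold map_map o_def, intro arg_cong[where f = "msum C U (trg y)"] map_cong[OF refl])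
    fix l assume "l \<in> set [0..<m]"
    then have l: "l < m" by simp
    have "cmp C y (cmp C (a l) (b l)) = cmp C (cmp C y (a l)) (b l)"
      using ab l y by simp
    then show "cmp C y (cmp C (a l) (b l)) = (if l = k then b k else zer C U (trg y))"
      using delta[OF l] ab l y by auto
  qed
  finally show ?thesis
    using msum_delta[of "[0..<m]" U "trg y" k "b k"] bk U y by simp
qed

lemma is_dsum_pairE:
  assumes "is_dsum C S [A, B] ins prs"
  obtains i1 i2 p1 p2 where "ins = [i1, i2]" "prs = [p1, p2]"
    "arr i1" "src i1 = A" "trg i1 = S" "arr i2" "src i2 = B" "trg i2 = S"
    "arr p1" "src p1 = S" "trg p1 = A" "arr p2" "src p2 = S" "trg p2 = B"
    "cmp C p1 i1 = idm C A" "cmp C p2 i2 = idm C B"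
    "cmp C p1 i2 = zer C B A" "cmp C p2 i1 = zer C A B"
    "add C (cmp C i1 p1) (cmp C i2 p2) = idm C S"
proof -
  note D = is_dsumD[OF assms]
  obtain i1 i2 p1 p2 where ins: "ins = [i1, i2]" and prs: "prs = [p1, p2]"
    using D(2,3) by (auto simp: length_Suc_conv numeral_2_eq_2)
  show thesis
  proof (rule that[OF ins prs])
    show "cmp C p1 i1 = idm C A" "cmp C p2 i2 = idm C B" "cmp C p1 i2 = zer C B A" "cmp C p2 i1 = zer C A B"
      using D(5)[of 0 0] D(5)[of 1 1] D(5)[of 0 1] D(5)[of 1 0] ins prs by simp_all
    show "add C (cmp C i1 p1) (cmp C i2 p2) = idm C S"
      using D(1,6) D(4)[of 0] D(4)[of 1] ins prs by simp
  qed (use D(4)[of 0] D(4)[of 1] ins prs in simp_all)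
qed

lemma is_dsum_pair_cmp:
  assumes "is_dsum C S [W, Z] [i1, i2] [p1, p2]"
    and b: "arr b" "trg b = W" and b': "arr b'" "src b' = src b" "trg b' = Z"
    and a: "arr a" "src a = W" and a': "arr a'" "src a' = Z" "trg a' = trg a"
  shows "cmp C (add C (cmp C a p1) (cmp C a' p2)) (add C (cmp C i1 b) (cmp C i2 b'))
       = add C (cmp C a b) (cmp C a' b')"
proof -
  obtain d: "arr i1" "src i1 = W" "trg i1 = S" "arr i2" "src i2 = Z" "trg i2 = S"
    "arr p1" "src p1 = S" "trg p1 = W" "arr p2" "src p2 = S" "trg p2 = Z"
    and r: "cmp C p1 i1 = idm C W" "cmp C p2 i2 = idm C Z"
      "cmp C p1 i2 = zer C Z W" "cmp C p2 i1 = zer C W Z"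
    by (rule is_dsum_pairE[OF assms(1)]) auto
  have obj: "W \<in> Obj C" "Z \<in> Obj C" "src b \<in> Obj C"
    using d b arr_objs by blast+
  have "cmp C p1 (cmp C i1 b) = b" "cmp C p2 (cmp C i2 b') = b'"
    using cmp_reassoc[of p1 i1 "idm C W" b] cmp_reassoc[of p2 i2 "idm C Z" b'] d r b b' by simp_all
  moreover have "cmp C p1 (cmp C i2 b') = zer C (src b) W" "cmp C p2 (cmp C i1 b) = zer C (src b) Z"
    using cmp_assoc[of b' i2 p1] cmp_assoc[of b i1 p2] d r b b' obj by simp_all
  ultimately show ?thesis
    using d a a' b b' obj by simp
qed

lemma is_dsum_cons:
  assumes pair: "is_dsum C S [Z, B] [i1, i2] [p1, p2]" and tail: "is_dsum C B Zs ins prs"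
  shows "is_dsum C S (Z # Zs) (i1 # map (cmp C i2) ins) (p1 # map (\<lambda>q. cmp C q p2) prs)"
proof -
  obtain d: "arr i1" "src i1 = Z" "trg i1 = S" "arr i2" "src i2 = B" "trg i2 = S"
      "arr p1" "src p1 = S" "trg p1 = Z" "arr p2" "src p2 = S" "trg p2 = B"
    and r: "cmp C p1 i1 = idm C Z" "cmp C p2 i2 = idm C B"
      "cmp C p1 i2 = zer C B Z" "cmp C p2 i1 = zer C Z B"
    and sum: "add C (cmp C i1 p1) (cmp C i2 p2) = idm C S"
    by (rule is_dsum_pairE[OF pair]) auto
  note T = is_dsumD[OF tail]
  let ?m = "length Zs"
  have obj: "S \<in> Obj C" "B \<in> Obj C" "Z \<in> Obj C"
    using d arr_objs by blast+
  have p2_i2: "cmp C p2 (cmp C i2 x) = x" if "arr x" "trg x = B" for x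
    using cmp_reassoc[of p2 i2 "idm C B" x] d r that by simp
  have p1_i2: "cmp C p1 (cmp C i2 x) = zer C (src x) Z" if "arr x" "trg x = B" for x
    using cmp_assoc[of x i2 p1] d r obj that by simp
  let ?fs = "map (\<lambda>k. cmp C (ins ! k) (prs ! k)) [0..<?m]"
  have fs: "\<forall>f\<in>set ?fs. arr f \<and> src f = B \<and> trg f = B"
    using T(4) by auto
  have fs_p2: "\<forall>f\<in>set (map (\<lambda>f. cmp C f p2) ?fs). arr f \<and> src f = S \<and> trg f = B"
    using fs d by auto
  have "cmp C i2 p2 = cmp C i2 (cmp C (msum C B B ?fs) p2)"
    using T(6) d by simp
  also have "\<dots> = msum C S S (map (cmp C i2) (map (\<lambda>f. cmp C f p2) ?fs))"
    using cmp_msum_right[OF fs, of p2] cmp_msum_left[OF fs_p2, of i2] d obj by simp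
  also have "\<dots> = msum C S S (map (\<lambda>k. cmp C (map (cmp C i2) ins ! k) (map (\<lambda>q. cmp C q p2) prs ! k)) [0..<?m])"
    unfolding map_map o_def
    by (intro arg_cong[where f = "msum C S S"] map_cong) (use T d in auto)
  finally have tail_sum: "msum C S S (map (\<lambda>k. cmp C (map (cmp C i2) ins ! k) (map (\<lambda>q. cmp C q p2) prs ! k)) [0..<?m])
      = cmp C i2 p2" ..
  show ?thesis
    using T(2-5) d r obj p2_i2 p1_i2 tail_sum sum
    by (intro is_dsumI) (auto simp: nth_Cons' map_upt_Suc simp del: upt_Suc)
qed

lemma dsum_exists:
  assumes "is_additive C" "set Zs \<subseteq> Obj C"
  shows "\<exists>S ins prs. is_dsum C S Zs ins prs"
  using assms(2)
proof (induction Zs)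
  case Nil
  then show ?case
    using assms(1) unfolding is_additive_def by blast
next
  case (Cons Z Zs)
  then obtain B ins prs where tail: "is_dsum C B Zs ins prs"
    by auto
  have "Z \<in> Obj C" "B \<in> Obj C"
    using Cons.prems is_dsumD(1)[OF tail] by auto
  then obtain S ins2 prs2 where pair: "is_dsum C S [Z, B] ins2 prs2"
    using assms(1) unfolding is_additive_def by blast
  then obtain i1 i2 p1 p2 where "ins2 = [i1, i2]" "prs2 = [p1, p2]"
    by (rule is_dsum_pairE)
  then show ?case
    using is_dsum_cons[OF _ tail] pair by blast
qed

lemma is_dsum_map_into:
  assumes dS: "is_dsum C S Xs ins prs" and U: "U \<in> Obj C"
    and F: "\<forall>k<length Xs. arr (F k) \<and> src (F k) = U \<and> trg (F k) = Xs ! k"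
  shows "\<exists>f. arr f \<and> src f = U \<and> trg f = S \<and> (\<forall>k<length Xs. cmp C (prs ! k) f = F k)"
proof -
  let ?n = "length Xs"
  note D = is_dsumD[OF dS]
  have ins: "\<forall>l<?n. arr (ins ! l) \<and> src (ins ! l) = Xs ! l \<and> trg (ins ! l) = S \<and>
      arr (F l) \<and> src (F l) = U \<and> trg (F l) = Xs ! l"
    using D(4) F by auto
  define f where "f = msum C U S (map (\<lambda>l. cmp C (ins ! l) (F l)) [0..<?n])"
  have "arr f \<and> src f = U \<and> trg f = S"
    unfolding f_def using msum_simps[of "map (\<lambda>l. cmp C (ins ! l) (F l)) [0..<?n]" U S] ins U D(1) by auto
  moreover have "cmp C (prs ! k) f = F k" if k: "k < ?n" for k
  proof -
    have "cmp C (prs ! k) f = (if k < ?n then F k else zer C U (trg (prs ! k)))"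
      unfolding f_def by (rule cmp_msum_delta[where W = "\<lambda>l. Xs ! l"]) (use ins D(4,5) U k in auto)
    then show ?thesis
      using k by simp
  qed
  ultimately show ?thesis
    by blast
qed

lemma is_dsum_regroup:
  assumes dX: "is_dsum C X (A # Ts) ins prs" and dT: "is_dsum C T Ts ins' prs'"
    and j: "arr j" "src j = T" "trg j = X" and q: "arr q" "src q = X" "trg q = T"
    and prs0_j: "cmp C (prs ! 0) j = zer C T A"
    and prs_j: "\<And>l. l < length Ts \<Longrightarrow> cmp C (prs ! Suc l) j = prs' ! l"
    and prs'_q: "\<And>l. l < length Ts \<Longrightarrow> cmp C (prs' ! l) q = prs ! Suc l"
  shows "is_dsum C X [A, T] [ins ! 0, j] [prs ! 0, q]"
proof -
  note DX = is_dsumD[OF dX] and DT = is_dsumD[OF dT]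
  have X0: "arr (ins ! 0)" "src (ins ! 0) = A" "trg (ins ! 0) = X"
    "arr (prs ! 0)" "src (prs ! 0) = X" "trg (prs ! 0) = A" "A \<in> Obj C"
    using DX(4)[of 0] by auto
  have XS: "\<forall>l<length Ts. arr (ins ! Suc l) \<and> src (ins ! Suc l) = Ts ! l \<and> trg (ins ! Suc l) = X \<and>
      arr (prs ! Suc l) \<and> src (prs ! Suc l) = X \<and> trg (prs ! Suc l) = Ts ! l \<and> Ts ! l \<in> Obj C"
    using DX(4) by fastforce
  have "cmp C q j = idm C T"
  proof (rule is_dsum_cmp_eqI[OF dT])
    fix k assume k: "k < length Ts"
    show "cmp C (prs' ! k) (cmp C q j) = cmp C (prs' ! k) (idm C T)"
      using cmp_reassoc[OF prs'_q[OF k]] prs_j[OF k] DT(4)[OF k] XS k q j by simp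
  qed (use q j DT(1) in simp_all)
  moreover have "cmp C q (ins ! 0) = zer C A T"
  proof (rule is_dsum_cmp_eqI[OF dT])
    fix k assume k: "k < length Ts"
    show "cmp C (prs' ! k) (cmp C q (ins ! 0)) = cmp C (prs' ! k) (zer C A T)"
      using cmp_reassoc[OF prs'_q[OF k]] DX(5)[of "Suc k" 0] DT(4)[OF k] XS X0 k q by simp
  qed (use q X0 DT(1) in simp_all)
  moreover have "add C (cmp C (ins ! 0) (prs ! 0)) (cmp C j q) = idm C X"
  proof (rule is_dsum_cmp_eqI[OF dX])
    fix k assume "k < length (A # Ts)"
    then consider "k = 0" | l where "k = Suc l" "l < length Ts"
      by (cases k) auto
    then show "cmp C (prs ! k) (add C (cmp C (ins ! 0) (prs ! 0)) (cmp C j q)) = cmp C (prs ! k) (idm C X)"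
    proof cases
      case 1
      then show ?thesis
        using cmp_reassoc[OF prs0_j] cmp_reassoc[of "prs ! 0" "ins ! 0" "idm C A" "prs ! 0"]
          DX(1) DX(5)[of 0 0] X0 j q by simp
    next
      case 2
      then show ?thesis
        using cmp_reassoc[OF prs_j[of l]] cmp_reassoc[of "prs ! k" "ins ! 0" "zer C A (Ts ! l)" "prs ! 0"]
          prs'_q[of l] DX(1) DX(5)[of k 0] DT(4) XS X0 j q by simp
    qed
  qed (use X0 j q DX(1) in simp_all)
  ultimately show ?thesis
    using DX(1) DX(5)[of 0 0] DT(1) prs0_j X0 j q by (intro is_dsumI) (auto simp: less_Suc_eq upt_rec)
qed

lemma is_dsum_split_head:
  assumes dX: "is_dsum C X (A # Ts) ins prs" and dT: "is_dsum C T Ts ins' prs'"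
  shows "\<exists>j q. is_dsum C X [A, T] [ins ! 0, j] [prs ! 0, q]"
proof -
  note DX = is_dsumD[OF dX] and DT = is_dsumD[OF dT]
  obtain j where "arr j" "src j = T" "trg j = X" "cmp C (prs ! 0) j = zer C T A"
    "\<And>l. l < length Ts \<Longrightarrow> cmp C (prs ! Suc l) j = prs' ! l"
    using is_dsum_map_into[OF dX DT(1), of "\<lambda>k. case k of 0 \<Rightarrow> zer C T A | Suc l \<Rightarrow> prs' ! l"]
      DX(4)[of 0] DT(1,4) by (fastforce simp: less_Suc_eq_0_disj)
  moreover obtain q where "arr q" "src q = X" "trg q = T"
    "\<And>l. l < length Ts \<Longrightarrow> cmp C (prs' ! l) q = prs ! Suc l"
    using is_dsum_map_into[OF dT DX(1), of "\<lambda>l. prs ! Suc l"] DX(4) by fastforce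
  ultimately show ?thesis
    using is_dsum_regroup[OF dX dT] by blast
qed

section \<open>Ideals and their products\<close>

lemma
  assumes I: "is_ideal C I"
  shows ideal_arr: "f \<in> I X Y \<Longrightarrow> arr f \<and> src f = X \<and> trg f = Y"
    and ideal_zer: "X \<in> Obj C \<Longrightarrow> Y \<in> Obj C \<Longrightarrow> zer C X Y \<in> I X Y"
    and ideal_add: "f \<in> I X Y \<Longrightarrow> g \<in> I X Y \<Longrightarrow> add C f g \<in> I X Y"
    and ideal_cmp_left: "f \<in> I X Y \<Longrightarrow> arr g \<Longrightarrow> src g = Y \<Longrightarrow> cmp C g f \<in> I X (trg g)"
    and ideal_cmp_right: "f \<in> I X Y \<Longrightarrow> arr h \<Longrightarrow> trg h = X \<Longrightarrow> cmp C f h \<in> I (src h) Y"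
proof -
  have closed: "cmp C g (cmp C f h) \<in> I W Z"
    if "h \<in> Hom C W X" "f \<in> I X Y" "g \<in> Hom C Y Z" for W X Y Z h f g
    using I that unfolding is_ideal_def by blast
  show arr: "arr f \<and> src f = X \<and> trg f = Y" if "f \<in> I X Y" for f X Y
    using I that hom_iff unfolding is_ideal_def by blast
  show "X \<in> Obj C \<Longrightarrow> Y \<in> Obj C \<Longrightarrow> zer C X Y \<in> I X Y"
    using I unfolding is_ideal_def by blast
  show "add C f g \<in> I X Y" if "f \<in> I X Y" "g \<in> I X Y"
    using I that arr[OF that(1)] arr_objs unfolding is_ideal_def by blast
  show "cmp C g f \<in> I X (trg g)" if f: "f \<in> I X Y" and g: "arr g" "src g = Y"
  proof -
    have "cmp C g (cmp C f (idm C X)) \<in> I X (trg g)"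
      by (rule closed[OF _ f]) (use arr[OF f] arr_objs[of f] g in \<open>auto simp: hom_iff\<close>)
    then show ?thesis
      using arr[OF f] by simp
  qed
  show "cmp C f h \<in> I (src h) Y" if f: "f \<in> I X Y" and h: "arr h" "trg h = X"
  proof -
    have "cmp C (idm C Y) (cmp C f h) \<in> I (src h) Y"
      by (rule closed[OF _ f]) (use arr[OF f] arr_objs[of f] h in \<open>auto simp: hom_iff\<close>)
    then show ?thesis
      using arr[OF f] h by simp
  qed
qed

lemma add_cmp_factor:
  assumes A: "is_ideal C A" and B: "is_ideal C B" and additive: "is_additive C"
    and W: "W \<in> Obj C" and b: "b \<in> B X W" and a: "a \<in> A W Y"
    and Z: "Z \<in> Obj C" and b': "b' \<in> B X Z" and a': "a' \<in> A Z Y"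
  shows "\<exists>S b'' a''. S \<in> Obj C \<and> b'' \<in> B X S \<and> a'' \<in> A S Y \<and> add C (cmp C a b) (cmp C a' b') = cmp C a'' b''"
proof -
  obtain S ins prs where dsum: "is_dsum C S [W, Z] ins prs"
    using additive W Z unfolding is_additive_def by blast
  then obtain i1 i2 p1 p2 where ins: "ins = [i1, i2]" and prs: "prs = [p1, p2]"
    and d: "arr i1" "src i1 = W" "trg i1 = S" "arr i2" "src i2 = Z" "trg i2 = S"
      "arr p1" "src p1 = S" "trg p1 = W" "arr p2" "src p2 = S" "trg p2 = Z"
    by (rule is_dsum_pairE)
  have "cmp C i1 b \<in> B X S" "cmp C i2 b' \<in> B X S"
    using ideal_cmp_left[OF B b, of i1] ideal_cmp_left[OF B b', of i2] d by simp_all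
  then have "add C (cmp C i1 b) (cmp C i2 b') \<in> B X S"
    by (rule ideal_add[OF B])
  moreover have "cmp C a p1 \<in> A S Y" "cmp C a' p2 \<in> A S Y"
    using ideal_cmp_right[OF A a, of p1] ideal_cmp_right[OF A a', of p2] d by simp_all
  then have "add C (cmp C a p1) (cmp C a' p2) \<in> A S Y"
    by (rule ideal_add[OF A])
  moreover have "add C (cmp C a b) (cmp C a' b') = cmp C (add C (cmp C a p1) (cmp C a' p2)) (add C (cmp C i1 b) (cmp C i2 b'))"
    using is_dsum_pair_cmp[of S W Z i1 i2 p1 p2 b b' a a'] dsum ins prs
      ideal_arr[OF B b] ideal_arr[OF B b'] ideal_arr[OF A a] ideal_arr[OF A a']
    by simp
  moreover have "S \<in> Obj C"
    using d arr_objs by blast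
  ultimately show ?thesis
    by blast
qed

lemma iprod_iff_single_cmp:
  assumes A: "is_ideal C A" and B: "is_ideal C B" and additive: "is_additive C"
    and X: "X \<in> Obj C" and Y: "Y \<in> Obj C"
  shows "f \<in> iprod C A B X Y \<longleftrightarrow> (\<exists>Z b a. Z \<in> Obj C \<and> b \<in> B X Z \<and> a \<in> A Z Y \<and> f = cmp C a b)"
proof
  assume "f \<in> iprod C A B X Y"
  then show "\<exists>Z b a. Z \<in> Obj C \<and> b \<in> B X Z \<and> a \<in> A Z Y \<and> f = cmp C a b"
  proof induction
    case iprod_zero
    show ?case
      using ideal_zer[OF A] ideal_zer[OF B] X Y
      by (intro exI[of _ X] exI[of _ "zer C X X"] exI[of _ "zer C X Y"] conjI) simp_all
  next
    case (iprod_step s W b a)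
    then show ?case
      using add_cmp_factor[OF A B additive] by blast
  qed
next
  assume "\<exists>Z b a. Z \<in> Obj C \<and> b \<in> B X Z \<and> a \<in> A Z Y \<and> f = cmp C a b"
  then obtain Z b a where Z: "Z \<in> Obj C" and b: "b \<in> B X Z" and a: "a \<in> A Z Y" and f: "f = cmp C a b"
    by blast
  have "add C (cmp C a b) (zer C X Y) \<in> iprod C A B X Y"
    by (rule iprod_step[OF iprod_zero[of C X Y A B] Z b a])
  then show "f \<in> iprod C A B X Y"
    using f ideal_arr[OF A a] ideal_arr[OF B b] X Y by simp
qed

section \<open>Local endomorphism rings\<close>

lemma local_endD:
  assumes "local_end C Y" "arr u" "src u = Y" "trg u = Y"
  shows "is_iso C Y Y u \<or> is_iso C Y Y (one_minus Y u)"
  using assms hom_iff unfolding local_end_def by blast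

lemma is_iso_conjugate:
  assumes i: "arr i" "src i = A" "trg i = X" and p: "arr p" "src p = X" "trg p = A"
    and pi: "cmp C p i = idm C A" and ip: "cmp C i p = idm C X"
    and h: "arr h" "src h = X" "trg h = X" and iso: "is_iso C A A (cmp C p (cmp C h i))"
  shows "is_iso C X X h"
proof -
  have obj: "A \<in> Obj C" "X \<in> Obj C"
    using i arr_objs by blast+
  have "is_iso C X A p" "is_iso C A X i"
    unfolding is_iso_iff using i p pi ip by blast+
  then have "is_iso C X X (cmp C i (cmp C (cmp C p (cmp C h i)) p))"
    using iso is_iso_cmp by blast
  moreover have "cmp C i (cmp C (cmp C p (cmp C h i)) p) = h"
    using cmp_reassoc[OF ip, of h] ip i p h obj by simp
  ultimately show ?thesis
    by simp
qed

lemma local_end_transfer: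
  assumes A: "local_end C A" and i: "arr i" "src i = A" "trg i = X" and p: "arr p" "src p = X" "trg p = A"
    and pi: "cmp C p i = idm C A" and ip: "cmp C i p = idm C X"
  shows "local_end C X"
  unfolding local_end_def
proof (intro conjI ballI)
  have obj: "A \<in> Obj C" "X \<in> Obj C"
    using i arr_objs by blast+
  then show "X \<in> Obj C" by blast
  show "idm C X \<noteq> zer C X X"
  proof
    assume X_zero: "idm C X = zer C X X"
    have "idm C A = cmp C p (cmp C (idm C X) i)"
      using pi i p by simp
    also have "\<dots> = zer C A A"
      using i p obj by (simp add: X_zero)
    finally show False
      using A unfolding local_end_def by blast
  qed
  fix f assume "f \<in> Hom C X X"
  then have f: "arr f" "src f = X" "trg f = X"
    using hom_iff by blast+
  have "cmp C p (cmp C (one_minus X f) i) = one_minus A (cmp C p (cmp C f i))"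
    using i p f pi obj by simp
  then show "is_iso C X X f \<or> is_iso C X X (one_minus X f)"
    using local_endD[OF A, of "cmp C p (cmp C f i)"] i p f obj
      is_iso_conjugate[OF i p pi ip f] is_iso_conjugate[OF i p pi ip, of "one_minus X f"]
    by auto
qed

lemma indecomposable_imp_local_end:
  assumes additive: "is_additive C" and ks: "krull_schmidt C" and X: "indecomposable C X"
  shows "local_end C X"
proof -
  have obj: "X \<in> Obj C" and nonzero: "idm C X \<noteq> zer C X X"
    using X unfolding indecomposable_def by blast+
  obtain Xs ins prs where dX: "is_dsum C X Xs ins prs" and local: "\<forall>A\<in>set Xs. local_end C A"
    using ks obj unfolding krull_schmidt_def by blast
  note D = is_dsumD[OF dX]
  obtain A Ts where Xs: "Xs = A # Ts"
    using D(6) nonzero by (cases Xs) auto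
  have "set Ts \<subseteq> Obj C"
    using D(4) Xs by (fastforce simp: in_set_conv_nth)
  then obtain T ins' prs' where "is_dsum C T Ts ins' prs'"
    using dsum_exists[OF additive] by blast
  then obtain j q where split: "is_dsum C X [A, T] [ins ! 0, j] [prs ! 0, q]"
    using is_dsum_split_head dX Xs by blast
  then obtain d: "arr (ins ! 0)" "src (ins ! 0) = A" "trg (ins ! 0) = X"
      "arr (prs ! 0)" "src (prs ! 0) = X" "trg (prs ! 0) = A"
      "arr j" "src j = T" "trg j = X" "arr q" "src q = X" "trg q = T"
    and r: "cmp C (prs ! 0) (ins ! 0) = idm C A"
    and sum: "add C (cmp C (ins ! 0) (prs ! 0)) (cmp C j q) = idm C X"
    by (rule is_dsum_pairE) auto
  have A: "local_end C A"
    using local Xs by simp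
  then have "idm C T = zer C T T"
    using X split unfolding indecomposable_def local_end_def by blast
  moreover have "cmp C j q = cmp C j (cmp C (idm C T) q)"
    using d by simp
  ultimately have "cmp C j q = zer C X X"
    using d obj arr_objs[of j] by simp
  then have "cmp C (ins ! 0) (prs ! 0) = idm C X"
    using sum d obj by simp
  then show ?thesis
    using local_end_transfer[OF A d(1-6) r] by simp
qed

lemma split_epi_iff_not_jrad:
  assumes Y: "local_end C Y" and h: "h \<in> Hom C Z Y"
  shows "split_epi C Z Y h \<longleftrightarrow> h \<notin> jrad C Z Y"
proof
  have obj: "Y \<in> Obj C" and nonzero: "idm C Y \<noteq> zer C Y Y"
    using Y unfolding local_end_def by blast+
  assume "split_epi C Z Y h"
  then obtain s where s: "arr s" "src s = Y" "trg s = Z" and hs: "cmp C h s = idm C Y"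
    unfolding split_epi_def Bex_def hom_iff by blast
  show "h \<notin> jrad C Z Y"
  proof
    assume "h \<in> jrad C Z Y"
    then have "idm C Y \<in> jrad C Y Y"
      using jrad_cmp_right[of h Z Y s] s hs by simp
    then show False
      using idm_in_jrad_imp_zer obj nonzero by blast
  qed
next
  have hm: "arr h" "src h = Z" "trg h = Y"
    using h hom_iff by blast+
  assume "h \<notin> jrad C Z Y"
  then obtain g where g: "arr g" "src g = Y" "trg g = Z"
    and "\<not> is_iso C Z Z (one_minus Z (cmp C g h))"
    using hm unfolding jrad_iff by blast
  then have "\<not> is_iso C Y Y (one_minus Y (cmp C h g))"
    using is_iso_one_minus_swap[of h Z Y g] hm by blast
  then have "is_iso C Y Y (cmp C h g)"
    using local_endD[OF Y, of "cmp C h g"] g hm by auto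
  then obtain u where u: "arr u" "src u = Y" "trg u = Y" "cmp C (cmp C h g) u = idm C Y"
    unfolding is_iso_iff by blast
  show "split_epi C Z Y h"
    unfolding split_epi_def using h u g hm by (intro conjI bexI[of _ "cmp C g u"]) (simp_all add: hom_iff)
qed

lemma split_mono_iff_not_jrad:
  assumes X: "local_end C X" and h: "h \<in> Hom C X Z"
  shows "split_mono C X Z h \<longleftrightarrow> h \<notin> jrad C X Z"
proof
  have obj: "X \<in> Obj C" and nonzero: "idm C X \<noteq> zer C X X"
    using X unfolding local_end_def by blast+
  assume "split_mono C X Z h"
  then obtain r where r: "arr r" "src r = Z" "trg r = X" and rh: "cmp C r h = idm C X"
    unfolding split_mono_def Bex_def hom_iff by blast
  show "h \<notin> jrad C X Z"
  proof
    assume "h \<in> jrad C X Z"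
    then have "idm C X \<in> jrad C X X"
      using jrad_cmp_left[of h X Z r] r rh by simp
    then show False
      using idm_in_jrad_imp_zer obj nonzero by blast
  qed
next
  have hm: "arr h" "src h = X" "trg h = Z"
    using h hom_iff by blast+
  assume "h \<notin> jrad C X Z"
  then obtain g where g: "arr g" "src g = Z" "trg g = X"
    and "\<not> is_iso C X X (one_minus X (cmp C g h))"
    using hm unfolding jrad_iff by blast
  then have "is_iso C X X (cmp C g h)"
    using local_endD[OF X, of "cmp C g h"] hm by auto
  then obtain u where u: "arr u" "src u = X" "trg u = X" "cmp C u (cmp C g h) = idm C X"
    unfolding is_iso_iff by blast
  show "split_mono C X Z h"
    unfolding split_mono_def using h u g hm by (intro conjI bexI[of _ "cmp C u g"]) (simp_all add: hom_iff)
qed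

lemma left_irr_iff:
  assumes additive: "is_additive C" and I: "is_ideal C I" and X: "X \<in> Obj C" and Y: "local_end C Y"
  shows "left_irr C I X Y f \<longleftrightarrow> f \<in> I X Y - iprod C (jrad C) I X Y"
proof -
  have "Y \<in> Obj C"
    using Y unfolding local_end_def by blast
  note factor = iprod_iff_single_cmp[OF is_ideal_jrad I additive X this]
  have split: "split_epi C Z Y a \<longleftrightarrow> a \<notin> jrad C Z Y" if "a \<in> Hom C Z Y" for Z a
    using split_epi_iff_not_jrad[OF Y that] .
  show ?thesis
    unfolding left_irr_def using factor split jrad_subset_hom by blast
qed

lemma right_irr_iff:
  assumes additive: "is_additive C" and I: "is_ideal C I" and X: "local_end C X" and Y: "Y \<in> Obj C"
  shows "right_irr C I X Y f \<longleftrightarrow> f \<in> I X Y - iprod C I (jrad C) X Y"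
proof -
  have "X \<in> Obj C"
    using X unfolding local_end_def by blast
  note factor = iprod_iff_single_cmp[OF I is_ideal_jrad additive this Y]
  have split: "split_mono C X Z b \<longleftrightarrow> b \<notin> jrad C X Z" if "b \<in> Hom C X Z" for Z b
    using split_mono_iff_not_jrad[OF X that] .
  show ?thesis
    unfolding right_irr_def using factor split jrad_subset_hom by blast
qed

end

theorem lemma4p6:
  fixes C :: "('o, 'm, 'k::alg_closed_field, 'z) tcat_scheme"
    and I :: "'o \<Rightarrow> 'o \<Rightarrow> 'm set"
    and X Y :: 'o and f :: 'm
  assumes "hf_ks_triangulated_kcat C"
    and "is_ideal C I"
    and "indecomposable C X" and "indecomposable C Y"
    and "f \<in> Hom C X Y"
  shows "(left_irr C I X Y f \<longleftrightarrow> f \<in> I X Y - iprod C (jrad C) I X Y)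
       \<and> (right_irr C I X Y f \<longleftrightarrow> f \<in> I X Y - iprod C I (jrad C) X Y)
       \<and> (irr C I X Y f \<longleftrightarrow> f \<in> I X Y - (iprod C (jrad C) I X Y \<union> iprod C I (jrad C) X Y))"
proof -
  have category: "is_category C" and klinear: "is_klinear C"
    and additive: "is_additive C" and ks: "krull_schmidt C"
    using assms(1) unfolding hf_ks_triangulated_kcat_def by auto
  interpret klinear_category C
    using category klinear by unfold_locales
  have "local_end C X" "local_end C Y"
    using indecomposable_imp_local_end[OF additive ks] assms(3,4) by blast+
  moreover have "X \<in> Obj C" "Y \<in> Obj C"
    using assms(3,4) unfolding indecomposable_def by blast+
  ultimately show ?thesis
    using left_irr_iff[OF additive assms(2)] right_irr_iff[OF additive assms(2)] unfolding irr_def by blast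
qed

end
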